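(* Let $p,q\ge2$ and let $\pi=(\pi_{u,v})$ be a probability law on $\{1,\dots,p\}\times\{1,\dots,q\}$ with margins $\pi_{u,\cdot}=\sum_v\pi_{u,v}$ and $\pi_{\cdot,v}=\sum_u\pi_{u,v}$. Let $(U_1,V_1)$ and $(U_2,V_2)$ be two independent draws from $\pi$. Then $$\pi_{u,v}=\frac{\pi_{u,\cdot}}{q}+\frac{\pi_{\cdot,v}}{p}-\frac{1}{pq}\quad\text{for all }u,v$$ if and only if the weighted expected number of agreements equals the weighted expected number of disagreements, namely $$\frac{\mathbb P(U_1=U_2,V_1=V_2)}{pq}+\frac{\mathbb P(U_1\ne U_2,V_1\ne V_2)}{p(p-1)q(q-1)}=\frac{\mathbb P(U_1=U_2,V_1\ne V_2)}{pq(q-1)}+\frac{\mathbb P(U_1\ne U_2,V_1=V_2)}{p(p-1)q}.$$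
   Context: An "agreement" between the two draws occurs when the two variables both coincide ($U_1=U_2$ and $V_1=V_2$) or both differ; a "disagreement" when exactly one coincides. The weights $pq$, $p(p-1)q(q-1)$, $pq(q-1)$, $p(p-1)q$ count the possible pairs of classes realizing each type. *)

theory Defs
  imports Complex_Main
begin

definition is_prob_law :: "nat \<Rightarrow> nat \<Rightarrow> (nat \<Rightarrow> nat \<Rightarrow> real) \<Rightarrow> bool" where
  "is_prob_law p q \<pi> \<longleftrightarrow>
     (\<forall>u\<in>{1..p}. \<forall>v\<in>{1..q}. 0 \<le> \<pi> u v) \<and>
     (\<Sum>u\<in>{1..p}. \<Sum>v\<in>{1..q}. \<pi> u v) = 1"

definition row_margin :: "nat \<Rightarrow> (nat \<Rightarrow> nat \<Rightarrow> real) \<Rightarrow> nat \<Rightarrow> real" where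
  "row_margin q \<pi> u = (\<Sum>v\<in>{1..q}. \<pi> u v)"

definition col_margin :: "nat \<Rightarrow> (nat \<Rightarrow> nat \<Rightarrow> real) \<Rightarrow> nat \<Rightarrow> real" where
  "col_margin p \<pi> v = (\<Sum>u\<in>{1..p}. \<pi> u v)"

text \<open>Probability that two independent draws (U1,V1), (U2,V2) from pi satisfy
  the predicate E (U1,V1) (U2,V2): the product law on pairs of draws.\<close>
definition pair_prob ::
  "nat \<Rightarrow> nat \<Rightarrow> (nat \<Rightarrow> nat \<Rightarrow> real) \<Rightarrow> (nat \<times> nat \<Rightarrow> nat \<times> nat \<Rightarrow> bool) \<Rightarrow> real" where
  "pair_prob p q \<pi> E =
     (\<Sum>x\<in>{1..p} \<times> {1..q}. \<Sum>y\<in>{1..p} \<times> {1..q}.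
        if E x y then \<pi> (fst x) (snd x) * \<pi> (fst y) (snd y) else 0)"

end

theory Submission
  imports Defs
begin

text \<open>Let S, R and C be the sums of the squares of the cell weights, of the row margins and
  of the column margins. The four pair probabilities are S, R - S, C - S and 1 - R - C + S, so
  the weighted agreements minus the weighted disagreements equal
  (S - R/q - C/p + 1/(pq)) / ((p - 1)(q - 1)). The interaction
  e(u,v) = \<pi>(u,v) - \<pi>(u,.)/q - \<pi>(.,v)/p + 1/(pq) has vanishing row and column sums, hence
  is orthogonal to the additive part \<pi> - e, and therefore
  \<Sum> e^2 = \<Sum> e \<pi> = S - R/q - C/p + 1/(pq). So the balance holds iff e vanishes.\<close>

lemma pair_prob_eq_sum:
  "pair_prob p q \<pi> E = (\<Sum>u1\<in>{1..p}. \<Sum>v1\<in>{1..q}. \<Sum>u2\<in>{1..p}. \<Sum>v2\<in>{1..q}.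
     if E (u1, v1) (u2, v2) then \<pi> u1 v1 * \<pi> u2 v2 else 0)"
  unfolding pair_prob_def sum.cartesian_product' fst_conv snd_conv ..

lemma pair_prob_transpose:
  "pair_prob p q \<pi> E =
     pair_prob q p (\<lambda>v u. \<pi> u v) (\<lambda>(v1, u1) (v2, u2). E (u1, v1) (u2, v2))"
  unfolding pair_prob_eq_sum by (subst (1 2) sum.swap) simp

lemma pair_prob_split:
  "pair_prob p q \<pi> E =
     pair_prob p q \<pi> (\<lambda>x y. E x y \<and> F x y) + pair_prob p q \<pi> (\<lambda>x y. E x y \<and> \<not> F x y)"
  unfolding pair_prob_def sum.distrib[symmetric] by (intro sum.cong refl) simp

lemma pair_prob_True:
  "pair_prob p q \<pi> (\<lambda>_ _. True) = (\<Sum>u\<in>{1..p}. \<Sum>v\<in>{1..q}. \<pi> u v)\<^sup>2"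
  by (simp add: pair_prob_eq_sum power2_eq_square sum_distrib_right) (simp add: sum_distrib_left)

lemma pair_prob_same_cell:
  "pair_prob p q \<pi> (\<lambda>(u1, v1) (u2, v2). u1 = u2 \<and> v1 = v2) =
     (\<Sum>u\<in>{1..p}. \<Sum>v\<in>{1..q}. (\<pi> u v)\<^sup>2)"
proof -
  have same_cell_eq: "(\<lambda>(u1, v1) (u2, v2). u1 = u2 \<and> v1 = v2) = (=)"
    by auto
  have "pair_prob p q \<pi> (=) = (\<Sum>x\<in>{1..p} \<times> {1..q}. (\<pi> (fst x) (snd x))\<^sup>2)"
    unfolding pair_prob_def by (simp add: sum.delta power2_eq_square)
  then show ?thesis
    unfolding same_cell_eq by (simp add: sum.cartesian_product')
qed

lemma pair_prob_same_row:
  "pair_prob p q \<pi> (\<lambda>(u1, v1) (u2, v2). u1 = u2) = (\<Sum>u\<in>{1..p}. (row_margin q \<pi> u)\<^sup>2)"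
proof -
  have "(\<Sum>u2\<in>{1..p}. \<Sum>v2\<in>{1..q}. if u1 = u2 then \<pi> u1 v1 * \<pi> u2 v2 else 0) =
      \<pi> u1 v1 * row_margin q \<pi> u1" if "u1 \<in> {1..p}" for u1 v1
    using that by (subst sum.swap) (simp add: sum.delta row_margin_def sum_distrib_left)
  then show ?thesis
    by (simp add: pair_prob_eq_sum power2_eq_square row_margin_def sum_distrib_right)
qed

lemma pair_prob_same_col:
  "pair_prob p q \<pi> (\<lambda>(u1, v1) (u2, v2). v1 = v2) = (\<Sum>v\<in>{1..q}. (col_margin p \<pi> v)\<^sup>2)"
  by (subst pair_prob_transpose) (simp add: pair_prob_same_row row_margin_def col_margin_def)

lemma pair_prob_same_row_diff_col:
  "pair_prob p q \<pi> (\<lambda>(u1, v1) (u2, v2). u1 = u2 \<and> v1 \<noteq> v2) =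
     (\<Sum>u\<in>{1..p}. (row_margin q \<pi> u)\<^sup>2) - (\<Sum>u\<in>{1..p}. \<Sum>v\<in>{1..q}. (\<pi> u v)\<^sup>2)"
proof -
  have "pair_prob p q \<pi> (\<lambda>(u1, v1) (u2, v2). u1 = u2) =
      pair_prob p q \<pi> (\<lambda>(u1, v1) (u2, v2). u1 = u2 \<and> v1 = v2)
      + pair_prob p q \<pi> (\<lambda>(u1, v1) (u2, v2). u1 = u2 \<and> v1 \<noteq> v2)"
    by (subst pair_prob_split[where F = "\<lambda>(u1, v1) (u2, v2). v1 = v2"]) (simp add: split_def)
  then show ?thesis
    by (simp add: pair_prob_same_row pair_prob_same_cell)
qed

lemma pair_prob_diff_row_same_col:
  "pair_prob p q \<pi> (\<lambda>(u1, v1) (u2, v2). u1 \<noteq> u2 \<and> v1 = v2) =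
     (\<Sum>v\<in>{1..q}. (col_margin p \<pi> v)\<^sup>2) - (\<Sum>u\<in>{1..p}. \<Sum>v\<in>{1..q}. (\<pi> u v)\<^sup>2)"
proof -
  have "pair_prob p q \<pi> (\<lambda>(u1, v1) (u2, v2). v1 = v2) =
      pair_prob p q \<pi> (\<lambda>(u1, v1) (u2, v2). u1 = u2 \<and> v1 = v2)
      + pair_prob p q \<pi> (\<lambda>(u1, v1) (u2, v2). u1 \<noteq> u2 \<and> v1 = v2)"
    by (subst pair_prob_split[where F = "\<lambda>(u1, v1) (u2, v2). u1 = u2"])
      (simp add: split_def conj_commute)
  then show ?thesis
    by (simp add: pair_prob_same_col pair_prob_same_cell)
qed

lemma pair_prob_diff_row_diff_col:
  "pair_prob p q \<pi> (\<lambda>(u1, v1) (u2, v2). u1 \<noteq> u2 \<and> v1 \<noteq> v2) =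
     (\<Sum>u\<in>{1..p}. \<Sum>v\<in>{1..q}. \<pi> u v)\<^sup>2 - (\<Sum>u\<in>{1..p}. (row_margin q \<pi> u)\<^sup>2)
     - (\<Sum>v\<in>{1..q}. (col_margin p \<pi> v)\<^sup>2) + (\<Sum>u\<in>{1..p}. \<Sum>v\<in>{1..q}. (\<pi> u v)\<^sup>2)"
proof -
  have "pair_prob p q \<pi> (\<lambda>_ _. True) =
      pair_prob p q \<pi> (\<lambda>(u1, v1) (u2, v2). u1 = u2)
      + pair_prob p q \<pi> (\<lambda>(u1, v1) (u2, v2). u1 \<noteq> u2 \<and> v1 = v2)
      + pair_prob p q \<pi> (\<lambda>(u1, v1) (u2, v2). u1 \<noteq> u2 \<and> v1 \<noteq> v2)"
    by (subst pair_prob_split[where F = "\<lambda>(u1, v1) (u2, v2). u1 = u2"],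
        subst (2) pair_prob_split[where F = "\<lambda>(u1, v1) (u2, v2). v1 = v2"])
      (simp add: split_def)
  then show ?thesis
    by (simp add: pair_prob_True pair_prob_same_row pair_prob_diff_row_same_col)
qed

definition interaction :: "nat \<Rightarrow> nat \<Rightarrow> (nat \<Rightarrow> nat \<Rightarrow> real) \<Rightarrow> nat \<Rightarrow> nat \<Rightarrow> real" where
  "interaction p q \<pi> u v =
     \<pi> u v - (row_margin q \<pi> u / real q + col_margin p \<pi> v / real p - 1 / (real p * real q))"

lemma sum_row_margin: "(\<Sum>u\<in>{1..p}. row_margin q \<pi> u) = (\<Sum>u\<in>{1..p}. \<Sum>v\<in>{1..q}. \<pi> u v)"
  by (simp add: row_margin_def)

lemma sum_col_margin: "(\<Sum>v\<in>{1..q}. col_margin p \<pi> v) = (\<Sum>u\<in>{1..p}. \<Sum>v\<in>{1..q}. \<pi> u v)"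
  unfolding col_margin_def by (rule sum.swap)

lemma interaction_row_sum:
  assumes "(\<Sum>u\<in>{1..p}. \<Sum>v\<in>{1..q}. \<pi> u v) = 1"
  shows "(\<Sum>v\<in>{1..q}. interaction p q \<pi> u v) = 0"
proof -
  have "p \<noteq> 0" "q \<noteq> 0"
    using assms by (auto intro: ccontr)
  then show ?thesis
    using sum_col_margin assms
    by (simp add: interaction_def sum_subtractf sum.distrib sum_divide_distrib[symmetric]
        row_margin_def)
qed

lemma interaction_col_sum:
  assumes "(\<Sum>u\<in>{1..p}. \<Sum>v\<in>{1..q}. \<pi> u v) = 1"
  shows "(\<Sum>u\<in>{1..p}. interaction p q \<pi> u v) = 0"
proof -
  have "p \<noteq> 0" "q \<noteq> 0"
    using assms by (auto intro: ccontr)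
  then show ?thesis
    using sum_row_margin assms
    by (simp add: interaction_def sum_subtractf sum.distrib sum_divide_distrib[symmetric]
        col_margin_def)
qed

lemma sum_interaction_mult_additive_part:
  assumes total: "(\<Sum>u\<in>{1..p}. \<Sum>v\<in>{1..q}. \<pi> u v) = 1"
  shows "(\<Sum>u\<in>{1..p}. \<Sum>v\<in>{1..q}.
      interaction p q \<pi> u v * (\<pi> u v - interaction p q \<pi> u v)) = 0"
proof -
  define e where "e = interaction p q \<pi>"
  define r where "r = row_margin q \<pi>"
  define c where "c = col_margin p \<pi>"
  have additive_part: "\<pi> u v - e u v = r u / real q + c v / real p - 1 / (real p * real q)" for u v
    by (simp add: e_def r_def c_def interaction_def)
  have "(\<Sum>u\<in>{1..p}. \<Sum>v\<in>{1..q}. e u v * (\<pi> u v - e u v)) =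
      (\<Sum>u\<in>{1..p}. r u / real q * (\<Sum>v\<in>{1..q}. e u v))
      + (\<Sum>v\<in>{1..q}. c v / real p * (\<Sum>u\<in>{1..p}. e u v))
      - (\<Sum>u\<in>{1..p}. \<Sum>v\<in>{1..q}. e u v) / (real p * real q)"
    by (simp add: additive_part algebra_simps sum.distrib sum_subtractf sum_distrib_left
        sum_divide_distrib)
      (rule sum.swap)
  also have "\<dots> = 0"
    using interaction_row_sum[OF total] interaction_col_sum[OF total] by (simp add: e_def)
  finally show ?thesis
    by (simp add: e_def)
qed

lemma sum_interaction_mult_prob:
  "(\<Sum>u\<in>{1..p}. \<Sum>v\<in>{1..q}. interaction p q \<pi> u v * \<pi> u v) =
    (\<Sum>u\<in>{1..p}. \<Sum>v\<in>{1..q}. (\<pi> u v)\<^sup>2) - (\<Sum>u\<in>{1..p}. (row_margin q \<pi> u)\<^sup>2) / real q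
    - (\<Sum>v\<in>{1..q}. (col_margin p \<pi> v)\<^sup>2) / real p
    + (\<Sum>u\<in>{1..p}. \<Sum>v\<in>{1..q}. \<pi> u v) / (real p * real q)"
proof -
  define r where "r = row_margin q \<pi>"
  define c where "c = col_margin p \<pi>"
  have row_sum: "(\<Sum>v\<in>{1..q}. \<pi> u v) = r u" for u
    by (simp add: r_def row_margin_def)
  have col_sum: "(\<Sum>u\<in>{1..p}. \<pi> u v) = c v" for v
    by (simp add: c_def col_margin_def)
  have row_term: "(\<Sum>u\<in>{1..p}. \<Sum>v\<in>{1..q}. r u / real q * \<pi> u v) =
      (\<Sum>u\<in>{1..p}. (r u)\<^sup>2) / real q"
    by (simp only: sum_distrib_left[symmetric] row_sum) (simp add: power2_eq_square sum_divide_distrib)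
  have col_term: "(\<Sum>u\<in>{1..p}. \<Sum>v\<in>{1..q}. c v / real p * \<pi> u v) =
      (\<Sum>v\<in>{1..q}. (c v)\<^sup>2) / real p"
    by (subst sum.swap, simp only: sum_distrib_left[symmetric] col_sum)
      (simp add: power2_eq_square sum_divide_distrib)
  have "(\<Sum>u\<in>{1..p}. \<Sum>v\<in>{1..q}. interaction p q \<pi> u v * \<pi> u v) = (\<Sum>u\<in>{1..p}. \<Sum>v\<in>{1..q}.
      (\<pi> u v)\<^sup>2 - r u / real q * \<pi> u v - c v / real p * \<pi> u v + \<pi> u v / (real p * real q))"
    by (intro sum.cong refl) (simp add: r_def c_def interaction_def power2_eq_square algebra_simps)
  also have "\<dots> = (\<Sum>u\<in>{1..p}. \<Sum>v\<in>{1..q}. (\<pi> u v)\<^sup>2) - (\<Sum>u\<in>{1..p}. (r u)\<^sup>2) / real q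
      - (\<Sum>v\<in>{1..q}. (c v)\<^sup>2) / real p
      + (\<Sum>u\<in>{1..p}. \<Sum>v\<in>{1..q}. \<pi> u v) / (real p * real q)"
    by (simp only: sum.distrib sum_subtractf row_term col_term sum_divide_distrib[symmetric])
  finally show ?thesis
    by (simp add: r_def c_def)
qed

lemma sum_interaction_squared:
  assumes total: "(\<Sum>u\<in>{1..p}. \<Sum>v\<in>{1..q}. \<pi> u v) = 1"
  shows "(\<Sum>u\<in>{1..p}. \<Sum>v\<in>{1..q}. (interaction p q \<pi> u v)\<^sup>2) =
    (\<Sum>u\<in>{1..p}. \<Sum>v\<in>{1..q}. (\<pi> u v)\<^sup>2) - (\<Sum>u\<in>{1..p}. (row_margin q \<pi> u)\<^sup>2) / real q
    - (\<Sum>v\<in>{1..q}. (col_margin p \<pi> v)\<^sup>2) / real p + 1 / (real p * real q)"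
proof -
  have "(\<Sum>u\<in>{1..p}. \<Sum>v\<in>{1..q}. (interaction p q \<pi> u v)\<^sup>2) =
      (\<Sum>u\<in>{1..p}. \<Sum>v\<in>{1..q}. interaction p q \<pi> u v * \<pi> u v)"
    using sum_interaction_mult_additive_part[OF total]
    by (simp add: power2_eq_square algebra_simps sum_subtractf)
  also have "\<dots> = (\<Sum>u\<in>{1..p}. \<Sum>v\<in>{1..q}. (\<pi> u v)\<^sup>2)
      - (\<Sum>u\<in>{1..p}. (row_margin q \<pi> u)\<^sup>2) / real q
      - (\<Sum>v\<in>{1..q}. (col_margin p \<pi> v)\<^sup>2) / real p + 1 / (real p * real q)"
    by (simp only: sum_interaction_mult_prob total)
  finally show ?thesis .
qed

lemma weighted_agreement_balance_iff:
  fixes p q s r c :: real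
  assumes "p > 1" "q > 1"
  shows "s / (p * q) + (1 - r - c + s) / (p * (p - 1) * q * (q - 1)) =
      (r - s) / (p * q * (q - 1)) + (c - s) / (p * (p - 1) * q)
    \<longleftrightarrow> s - r / q - c / p + 1 / (p * q) = 0"
proof -
  have "p \<noteq> 0" "q \<noteq> 0" "p - 1 \<noteq> 0" "q - 1 \<noteq> 0"
    using assms by auto
  then have "s / (p * q) + (1 - r - c + s) / (p * (p - 1) * q * (q - 1))
      - ((r - s) / (p * q * (q - 1)) + (c - s) / (p * (p - 1) * q))
      = (s - r / q - c / p + 1 / (p * q)) / ((p - 1) * (q - 1))"
    by (simp add: divide_simps) algebra
  with \<open>p - 1 \<noteq> 0\<close> \<open>q - 1 \<noteq> 0\<close> show ?thesis
    by (simp add: eq_iff_diff_eq_0[of "s / (p * q) + (1 - r - c + s) / (p * (p - 1) * q * (q - 1))"])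
qed

theorem theorem6:
  fixes p q :: nat and \<pi> :: "nat \<Rightarrow> nat \<Rightarrow> real"
  assumes "p \<ge> 2" and "q \<ge> 2" and "is_prob_law p q \<pi>"
  shows "(\<forall>u\<in>{1..p}. \<forall>v\<in>{1..q}.
            \<pi> u v = row_margin q \<pi> u / real q + col_margin p \<pi> v / real p
                     - 1 / (real p * real q))
    \<longleftrightarrow>
    pair_prob p q \<pi> (\<lambda>(u1,v1) (u2,v2). u1 = u2 \<and> v1 = v2) / (real p * real q)
    + pair_prob p q \<pi> (\<lambda>(u1,v1) (u2,v2). u1 \<noteq> u2 \<and> v1 \<noteq> v2)
        / (real p * (real p - 1) * real q * (real q - 1))
    = pair_prob p q \<pi> (\<lambda>(u1,v1) (u2,v2). u1 = u2 \<and> v1 \<noteq> v2)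
        / (real p * real q * (real q - 1))
    + pair_prob p q \<pi> (\<lambda>(u1,v1) (u2,v2). u1 \<noteq> u2 \<and> v1 = v2)
        / (real p * (real p - 1) * real q)"
proof -
  have total: "(\<Sum>u\<in>{1..p}. \<Sum>v\<in>{1..q}. \<pi> u v) = 1"
    using assms(3) by (simp add: is_prob_law_def)
  have pq: "real p > 1" "real q > 1"
    using assms(1,2) by auto
  have "(\<forall>u\<in>{1..p}. \<forall>v\<in>{1..q}. \<pi> u v = row_margin q \<pi> u / real q + col_margin p \<pi> v / real p
      - 1 / (real p * real q)) \<longleftrightarrow> (\<forall>u\<in>{1..p}. \<forall>v\<in>{1..q}. interaction p q \<pi> u v = 0)"
    by (simp add: interaction_def)
  also have "\<dots> \<longleftrightarrow> (\<Sum>u\<in>{1..p}. \<Sum>v\<in>{1..q}. (interaction p q \<pi> u v)\<^sup>2) = 0"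
    by (simp add: sum_nonneg_eq_0_iff sum_nonneg)
  also have "\<dots> \<longleftrightarrow> (\<Sum>u\<in>{1..p}. \<Sum>v\<in>{1..q}. (\<pi> u v)\<^sup>2)
      - (\<Sum>u\<in>{1..p}. (row_margin q \<pi> u)\<^sup>2) / real q
      - (\<Sum>v\<in>{1..q}. (col_margin p \<pi> v)\<^sup>2) / real p + 1 / (real p * real q) = 0"
    by (simp only: sum_interaction_squared[OF total])
  finally show ?thesis
    by (simp only: weighted_agreement_balance_iff[OF pq] pair_prob_same_cell
        pair_prob_same_row_diff_col pair_prob_diff_row_same_col pair_prob_diff_row_diff_col
        total power_one)
qed

end
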